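(* Let $F$ be a distribution function on $[0,1]$ satisfying: (i) $F$ has a positive, non-increasing, differentiable density $g$; (ii) the hazard ratio $g(x)/(1-F(x))$ is non-decreasing. Let $\{f_{i,j}\}$, $f_{i,j}=f_{j,i}$ ($1\le i\le j\le n$), be independent with distribution $F$. Call $I\subseteq[n]$ a K-set if $f_{i,j}\ge (f_{i,i}+f_{j,j})/2$ for all distinct $i,j\in I$, and let $L_n$ be the maximum cardinality of a K-set. Let $\xi\in(0,1)$ be the positive root of $1-\xi=e^{-2\xi}$ and $c=(2e^{-1})^{1/2}\,\xi^{-1/2}(1-\xi)^{-1/2}\ (=2.14\dots)$. Then for every $\delta>0$, $\mathrm{P}\bigl(L_n\le (c+\delta)n^{1/2}\bigr)\to1$ as $n\to\infty$. *)

theory Defs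
  imports "HOL-Probability.Probability"
begin

definition entry_idx :: "nat \<Rightarrow> (nat \<times> nat) set" where
  "entry_idx n = {(i, j). 1 \<le> i \<and> i \<le> j \<and> j \<le> n}"

definition sym_entry :: "(nat \<times> nat \<Rightarrow> real) \<Rightarrow> nat \<Rightarrow> nat \<Rightarrow> real" where
  "sym_entry \<omega> i j = \<omega> (min i j, max i j)"

definition is_Kset :: "nat \<Rightarrow> (nat \<times> nat \<Rightarrow> real) \<Rightarrow> nat set \<Rightarrow> bool" where
  "is_Kset n \<omega> I \<longleftrightarrow> I \<subseteq> {1..n} \<and>
     (\<forall>i\<in>I. \<forall>j\<in>I. i \<noteq> j \<longrightarrow>
        sym_entry \<omega> i j \<ge> (sym_entry \<omega> i i + sym_entry \<omega> j j) / 2)"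

definition L_max :: "nat \<Rightarrow> (nat \<times> nat \<Rightarrow> real) \<Rightarrow> nat" where
  "L_max n \<omega> = Max {card I | I. is_Kset n \<omega> I}"

definition dens_distr :: "(real \<Rightarrow> real) \<Rightarrow> real measure" where
  "dens_distr g = density lborel (\<lambda>x. ennreal (indicator {0..1} x * g x))"

definition cdf_of :: "(real \<Rightarrow> real) \<Rightarrow> real \<Rightarrow> real" where
  "cdf_of g x = integral {0..x} g"

definition xi_const :: real where
  "xi_const = (THE \<xi>. 0 < \<xi> \<and> \<xi> < 1 \<and> 1 - \<xi> = exp (-2 * \<xi>))"

definition c_const :: real where
  "c_const = sqrt (2 * exp (-1)) / sqrt (xi_const * (1 - xi_const))"

end

theory Submission
  imports Defs "HOL-Real_Asymp.Real_Asymp"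
begin

(*
  Let k = floor (C sqrt n) + 1, c = sqrt 3 ^ k, and let Z > 0 be any random variable. If some
  k-set I is a K-set, then either Z >= c or the indicator of "I is a K-set" is at most c / Z, so
  P(L_n >= k) <= E Z / c + sum over |I| = k of E [1{I is a K-set} c / Z].
  Take Z = prod_i w(f(i,i)) with w(y) = sqrt (1 + 3 exp (-a F(y))) and a = (k - 1) / 2, where F
  is the distribution function continued concavely to the real line. Given the diagonal, the
  events f(i,j) >= (f(i,i) + f(j,j)) / 2 are independent, and by concavity each has probability
  at most exp (-(F(f(i,i)) + F(f(j,j))) / 2); hence P(I is a K-set | diagonal) is at most
  prod_(i in I) exp (-a F(f(i,i))). Expanding Z^2 = prod_i (1 + 3 exp (-a F(f(i,i)))) shows that
  the sum over I is again at most E Z / c. Finally E Z = (E w)^n <= (1 + beta / a)^n with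
  beta = 2 - 2 ln (3/2), so P(L_n >= k) <= 2 exp (2 beta n / (k - 1) - k ln 3 / 2), which tends
  to 0 as soon as C^2 > 4 beta / ln 3 (about 4.33); this holds for C = c + delta because
  c^2 is about 4.58.
*)

section \<open>The constants\<close>

lemma exp_ge_sum_lessThan:
  fixes x :: real
  assumes "0 \<le> x"
  shows "(\<Sum>n<N. x ^ n / fact n) \<le> exp x"
proof -
  have "(\<Sum>n<N. x ^ n /\<^sub>R fact n) \<le> (\<Sum>n. x ^ n /\<^sub>R fact n)"
    by (rule sum_le_suminf[OF summable_exp_generic]) (use assms in auto)
  then show ?thesis by (simp add: exp_def divide_inverse mult.commute)
qed

lemma exp_neg_159_100_less: "exp (- (159/100) :: real) < 205/1000"
proof -
  have "1000/205 < (\<Sum>n<8. (159/100::real) ^ n / fact n)"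
    by (simp add: lessThan_nat_numeral fact_numeral eval_nat_numeral)
  also have "\<dots> \<le> exp (159/100)"
    by (rule exp_ge_sum_lessThan) simp
  finally have "inverse (exp (159/100::real)) < inverse (1000/205)"
    by (intro less_imp_inverse_less) auto
  then show ?thesis by (simp add: exp_minus)
qed

text \<open>The chord of the convex function \<open>exp (-2 x)\<close> between \<open>0\<close> and \<open>0.795\<close> lies strictly
  below \<open>1 - x\<close> on \<open>(0, 0.795]\<close>.\<close>
lemma exp_root_ge:
  fixes y :: real
  assumes "0 < y" "1 - y = exp (-2 * y)"
  shows "795/1000 \<le> y"
proof (rule ccontr)
  assume "\<not> 795/1000 \<le> y"
  define t where "t = y / (795/1000)"
  have t: "0 < t" "t \<le> 1" using assms \<open>\<not> 795/1000 \<le> y\<close> by (auto simp: t_def)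
  have "exp ((1 - t) * 0 + t * (-2 * (795/1000))) \<le> (1 - t) * exp 0 + t * exp (-2 * (795/1000::real))"
    using convex_onD[OF exp_convex, of t 0 "-2 * (795/1000)"] t by simp
  moreover have "(1 - t) * 0 + t * (-2 * (795/1000)) = -2 * y" by (simp add: t_def)
  ultimately have "1 - y \<le> (1 - t) + t * exp (-2 * (795/1000::real))" using assms by simp
  hence "t * (1 - 795/1000 - exp (-2 * (795/1000::real))) \<le> 0"
    by (simp add: t_def algebra_simps)
  with t exp_neg_159_100_less show False by (simp add: mult_le_0_iff)
qed

text \<open>Above \<open>0.795\<close> the slope of \<open>exp (-2 x)\<close> is less than \<open>1/2\<close> in absolute value, so
  \<open>exp (-2 x)\<close> meets \<open>1 - x\<close> at most once there.\<close>
lemma exp_root_unique: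
  fixes x y :: real
  assumes "795/1000 \<le> x" "x \<le> y" "1 - x = exp (-2 * x)" "1 - y = exp (-2 * y)"
  shows "x = y"
proof (rule ccontr)
  assume "x \<noteq> y"
  hence xy: "x < y" using assms by simp
  have "exp (-2*x) - exp (-2*y) = exp (-2*x) * (1 - exp (-2*(y-x)))"
    by (simp add: algebra_simps exp_add[symmetric])
  also have "\<dots> \<le> exp (-2*x) * (2*(y-x))"
    using exp_ge_add_one_self[of "-2*(y-x)"] by (intro mult_left_mono) (linarith, simp)
  also have "\<dots> \<le> exp (- (159/100)) * (2*(y-x))"
    using assms xy by (intro mult_right_mono) auto
  also have "\<dots> < (1/2) * (2*(y-x))"
    using xy exp_neg_159_100_less by (intro mult_strict_right_mono) auto
  finally show False using assms by simp
qed

lemma xi_const_root: "795/1000 \<le> xi_const" "xi_const < 1" "1 - xi_const = exp (-2 * xi_const)"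
proof -
  let ?P = "\<lambda>\<xi>::real. 0 < \<xi> \<and> \<xi> < 1 \<and> 1 - \<xi> = exp (-2 * \<xi>)"
  have "\<exists>x\<ge>795/1000. x \<le> 1 \<and> 1 - x - exp (-2 * x) = (0::real)"
  proof (rule IVT2)
    show "0 \<le> 1 - 795/1000 - exp (-2 * (795/1000::real))" using exp_neg_159_100_less by simp
  qed (auto intro!: continuous_intros)
  then obtain x :: real where x: "795/1000 \<le> x" "x \<le> 1" "1 - x = exp (-2 * x)" by auto
  have Px: "?P x" using x by (cases "x = 1") auto
  have "\<exists>!\<xi>. ?P \<xi>"
  proof (rule ex1I[of _ x])
    fix y assume "?P y"
    then show "y = x"
      using Px exp_root_ge exp_root_unique by (metis linorder_le_cases)
  qed (rule Px)
  hence "?P xi_const" unfolding xi_const_def by (rule theI')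
  then show "795/1000 \<le> xi_const" "xi_const < 1" "1 - xi_const = exp (-2 * xi_const)"
    using exp_root_ge by auto
qed

lemma ln_ge_two_mul_div:
  fixes x :: real
  assumes "1 \<le> x"
  shows "2 * (x - 1) / (x + 1) \<le> ln x"
proof -
  let ?f = "\<lambda>x::real. ln x - 2 * (x - 1) / (x + 1)"
  have "?f 1 \<le> ?f x"
  proof (rule DERIV_nonneg_imp_nondecreasing[OF assms])
    fix y :: real assume y: "1 \<le> y" "y \<le> x"
    have "DERIV ?f y :> 1 / y - 4 / (y + 1)^2"
      using y by (auto intro!: derivative_eq_intros simp: power2_eq_square field_simps)
    moreover have "4 / (y + 1)^2 \<le> 1 / y"
      using y sum_power2_ge_zero[of "y - 1" 0] by (simp add: divide_simps power2_eq_square algebra_simps)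
    ultimately show "\<exists>d. DERIV ?f y :> d \<and> 0 \<le> d" by auto
  qed
  then show ?thesis by simp
qed

definition beta_const :: real where
  "beta_const = 2 - 2 * ln (3/2)"

lemma beta_const_nonneg: "0 \<le> beta_const"
  unfolding beta_const_def using ln_le_minus_one[of "3/2"] by simp

lemma c_const_pos: "0 < c_const"
  unfolding c_const_def using xi_const_root by simp

lemma c_const_sq_ge: "4 * beta_const / ln 3 \<le> c_const\<^sup>2"
proof -
  define q where "q = xi_const * (1 - xi_const)"
  have "q - 795/1000 * (205/1000) = (xi_const - 795/1000) * (205/1000 - xi_const)"
    by (simp add: q_def field_simps)
  also have "\<dots> \<le> 0"
    using xi_const_root(1,2) by (intro mult_nonneg_nonpos) auto
  finally have q: "0 < q" "q \<le> 795/1000 * (205/1000)"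
    using xi_const_root(1,2) by (auto simp: q_def)
  have ln3: "ln (3::real) = ln (3/2) + ln 2" using ln_mult[of "3/2" "2::real"] by simp
  have "4/10 \<le> ln (3/2::real)" using ln_ge_two_mul_div[of "3/2"] by simp
  hence "4 * beta_const * exp 1 * q \<le> 4 * beta_const * (272/100) * (795/1000 * (205/1000))"
    using beta_const_nonneg e_less_272 q by (intro mult_mono) auto
  also have "\<dots> \<le> 2 * ln 3"
    using \<open>4/10 \<le> ln (3/2::real)\<close> ln2_ge_two_thirds unfolding beta_const_def ln3 by simp
  finally have "4 * beta_const \<le> ln 3 * (2 * exp (-1) / q)"
    using q by (simp add: exp_minus field_simps)
  moreover have "c_const\<^sup>2 = 2 * exp (-1) / q"
    unfolding c_const_def q_def using xi_const_root(1,2) q by (simp add: power_divide power_mult_distrib real_sqrt_mult)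
  ultimately show ?thesis by (simp add: pos_divide_le_eq mult.commute)
qed

section \<open>An auxiliary weight and counting over pairs\<close>

definition weight :: "real \<Rightarrow> real" where
  "weight s = sqrt (1 + 3 * exp (- s))"

definition weight_primitive :: "real \<Rightarrow> real" where
  "weight_primitive s = 2 * (ln (1 + weight s) - weight s)"

lemma weight_ge_1: "1 \<le> weight s"
  by (simp add: weight_def)

lemma weight_primitive_has_derivative:
  "(weight_primitive has_real_derivative weight s - 1) (at s)"
proof -
  define w where "w = weight s"
  have pos: "0 < 1 + 3 * exp (- s)"
    by (intro add_pos_pos) auto
  have w: "1 \<le> w" "w\<^sup>2 = 1 + 3 * exp (- s)"
    using weight_ge_1 pos by (auto simp: w_def weight_def)
  have "(weight has_real_derivative - 3 * exp (- s) / (2 * w)) (at s)"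
    unfolding w_def weight_def using pos by (auto intro!: derivative_eq_intros simp: field_simps)
  hence "(weight_primitive has_real_derivative
           2 * (- 3 * exp (- s) / (2 * w) / (1 + w) - - 3 * exp (- s) / (2 * w))) (at s)"
    unfolding weight_primitive_def[abs_def] w_def using weight_ge_1[of s]
    by (auto intro!: derivative_eq_intros)
  moreover have "2 * (- 3 * exp (- s) / (2 * w) / (1 + w) - - 3 * exp (- s) / (2 * w)) = (w\<^sup>2 - 1) / (1 + w)"
    using w by (simp add: divide_simps) (simp add: algebra_simps)
  moreover have "(w\<^sup>2 - 1) / (1 + w) = w - 1"
    using w(1) by (simp add: field_simps power2_eq_square)
  ultimately show ?thesis by (simp add: w_def)
qed

lemma weight_primitive_diff_le: "weight_primitive s - weight_primitive 0 \<le> beta_const"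
proof -
  have "weight 0 = 2" by (simp add: weight_def)
  hence "weight_primitive 0 = 2 * (ln 3 - 2)" by (simp add: weight_primitive_def)
  moreover have "ln (1 + weight s) - ln 2 \<le> (1 + weight s) / 2 - 1"
    using ln_le_minus_one[of "(1 + weight s) / 2"] weight_ge_1[of s] by (simp add: ln_div)
  moreover have "ln (3::real) = ln (3/2) + ln 2" using ln_mult[of "3/2" "2::real"] by simp
  ultimately show ?thesis
    using weight_ge_1[of s] by (simp add: weight_primitive_def beta_const_def)
qed

lemma sum_prod_card_subsets_le:
  fixes w :: "'a \<Rightarrow> real"
  assumes "finite N" "\<And>i. i \<in> N \<Longrightarrow> 0 \<le> w i" "0 \<le> c"
  shows "c ^ k * (\<Sum>I | I \<subseteq> N \<and> card I = k. \<Prod>i\<in>I. w i) \<le> (\<Prod>i\<in>N. 1 + c * w i)"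
proof -
  have "c ^ k * (\<Sum>I | I \<subseteq> N \<and> card I = k. \<Prod>i\<in>I. w i)
      = (\<Sum>I | I \<subseteq> N \<and> card I = k. c ^ card I * (\<Prod>i\<in>I. w i))"
    by (simp add: sum_distrib_left)
  also have "\<dots> \<le> (\<Sum>I\<in>Pow N. c ^ card I * (\<Prod>i\<in>I. w i))"
    using assms by (intro sum_mono2) (auto intro!: mult_nonneg_nonneg prod_nonneg)
  also have "\<dots> = (\<Sum>I\<in>Pow N. (\<Prod>i\<in>I. c * w i) * (\<Prod>i\<in>N - I. 1))"
    by (simp add: prod.distrib)
  also have "\<dots> = (\<Prod>i\<in>N. c * w i + 1)"
    by (rule prod_add[OF assms(1), symmetric])
  finally show ?thesis by (simp add: add.commute)
qed

definition ordered_pairs :: "'a::linorder set \<Rightarrow> ('a \<times> 'a) set" where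
  "ordered_pairs I = {p. fst p \<in> I \<and> snd p \<in> I \<and> fst p < snd p}"

lemma finite_ordered_pairs: "finite I \<Longrightarrow> finite (ordered_pairs I)"
  by (rule finite_subset[of _ "I \<times> I"]) (auto simp: ordered_pairs_def)

lemma ordered_pairs_mono: "I \<subseteq> J \<Longrightarrow> ordered_pairs I \<subseteq> ordered_pairs J"
  by (auto simp: ordered_pairs_def)

lemma sum_ordered_pairs:
  fixes u :: "'a::linorder \<Rightarrow> 'b::comm_ring_1"
  assumes "finite I"
  shows "(\<Sum>p\<in>ordered_pairs I. u (fst p) + u (snd p)) = (of_nat (card I) - 1) * (\<Sum>i\<in>I. u i)"
proof -
  let ?swap = "\<lambda>(i, j). (j, i)"
  have fin: "finite (ordered_pairs I)" using finite_ordered_pairs[OF assms] .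
  have Sigma_eq: "Sigma I (\<lambda>i. I - {i}) = ordered_pairs I \<union> ?swap ` ordered_pairs I"
    by (auto simp: ordered_pairs_def image_iff)
  have "(\<Sum>p\<in>ordered_pairs I. u (fst p) + u (snd p))
      = (\<Sum>p\<in>ordered_pairs I. u (fst p)) + (\<Sum>p\<in>?swap ` ordered_pairs I. u (fst p))"
    by (subst sum.reindex) (auto simp: inj_on_def sum.distrib intro!: sum.cong)
  also have "\<dots> = (\<Sum>p\<in>Sigma I (\<lambda>i. I - {i}). u (fst p))"
    unfolding Sigma_eq
    by (rule sum.union_disjoint[symmetric]) (use fin in \<open>auto simp: ordered_pairs_def\<close>)
  also have "\<dots> = (\<Sum>i\<in>I. \<Sum>j\<in>I - {i}. u i)"
    using assms by (subst sum.Sigma) (auto simp: split_def)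
  also have "\<dots> = (\<Sum>i\<in>I. of_nat (card I - 1) * u i)"
    using assms by (auto simp: card_Diff_singleton intro!: sum.cong)
  also have "\<dots> = (of_nat (card I) - 1) * (\<Sum>i\<in>I. u i)"
    using assms by (cases "I = {}") (auto simp: sum_distrib_left of_nat_diff Suc_le_eq card_gt_0_iff)
  finally show ?thesis .
qed

lemma prod_ordered_pairs_exp:
  fixes u :: "'a::linorder \<Rightarrow> real"
  assumes "finite I"
  shows "(\<Prod>p\<in>ordered_pairs I. exp (- ((u (fst p) + u (snd p)) / 2)))
           = (\<Prod>i\<in>I. exp (- ((real (card I) - 1) / 2 * u i)))"
proof -
  have "(\<Prod>p\<in>ordered_pairs I. exp (- ((u (fst p) + u (snd p)) / 2)))
      = exp (\<Sum>p\<in>ordered_pairs I. - ((u (fst p) + u (snd p)) / 2))"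
    using finite_ordered_pairs[OF assms] by (simp add: exp_sum)
  also have "\<dots> = exp (- (\<Sum>p\<in>ordered_pairs I. u (fst p) + u (snd p)) / 2)"
    by (simp add: sum_negf sum_divide_distrib)
  also have "\<dots> = exp (\<Sum>i\<in>I. - ((real (card I) - 1) / 2 * u i))"
    by (simp add: sum_ordered_pairs[OF assms] sum_negf sum_distrib_left sum_divide_distrib)
  also have "\<dots> = (\<Prod>i\<in>I. exp (- ((real (card I) - 1) / 2 * u i)))"
    using assms by (simp add: exp_sum)
  finally show ?thesis .
qed

section \<open>K-sets\<close>

definition diag_idx :: "nat \<Rightarrow> (nat \<times> nat) set" where
  "diag_idx n = (\<lambda>i. (i, i)) ` {1..n}"

definition offdiag_idx :: "nat \<Rightarrow> (nat \<times> nat) set" where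
  "offdiag_idx n = {p. 1 \<le> fst p \<and> fst p < snd p \<and> snd p \<le> n}"

lemma entry_idx_eq: "entry_idx n = diag_idx n \<union> offdiag_idx n"
  by (auto simp: entry_idx_def diag_idx_def offdiag_idx_def image_iff)

lemma diag_offdiag_disjoint: "diag_idx n \<inter> offdiag_idx n = {}"
  by (auto simp: diag_idx_def offdiag_idx_def)

lemma finite_diag_idx: "finite (diag_idx n)"
  by (simp add: diag_idx_def)

lemma finite_offdiag_idx: "finite (offdiag_idx n)"
  by (rule finite_subset[of _ "{1..n} \<times> {1..n}"]) (auto simp: offdiag_idx_def)

lemma finite_entry_idx: "finite (entry_idx n)"
  by (simp add: entry_idx_eq finite_diag_idx finite_offdiag_idx)

lemma card_diag_idx: "card (diag_idx n) = n"
  unfolding diag_idx_def by (subst card_image) (auto simp: inj_on_def)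

lemma ordered_pairs_subset_offdiag_idx: "I \<subseteq> {1..n} \<Longrightarrow> ordered_pairs I \<subseteq> offdiag_idx n"
  by (auto simp: ordered_pairs_def offdiag_idx_def)

definition Kset_on :: "nat set \<Rightarrow> (nat \<times> nat \<Rightarrow> real) \<Rightarrow> bool" where
  "Kset_on I \<omega> \<longleftrightarrow> (\<forall>p\<in>ordered_pairs I. (\<omega> (fst p, fst p) + \<omega> (snd p, snd p)) / 2 \<le> \<omega> p)"

lemma Kset_on_subset: "Kset_on J \<omega> \<Longrightarrow> I \<subseteq> J \<Longrightarrow> Kset_on I \<omega>"
  unfolding Kset_on_def using ordered_pairs_mono[of I J] by blast

lemma is_Kset_iff: "is_Kset n \<omega> I \<longleftrightarrow> I \<subseteq> {1..n} \<and> Kset_on I \<omega>"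
proof -
  have "(\<forall>i\<in>I. \<forall>j\<in>I. i \<noteq> j \<longrightarrow> (sym_entry \<omega> i i + sym_entry \<omega> j j) / 2 \<le> sym_entry \<omega> i j)
        \<longleftrightarrow> Kset_on I \<omega>"
  proof
    assume H: "\<forall>i\<in>I. \<forall>j\<in>I. i \<noteq> j \<longrightarrow> (sym_entry \<omega> i i + sym_entry \<omega> j j) / 2 \<le> sym_entry \<omega> i j"
    show "Kset_on I \<omega>" unfolding Kset_on_def
    proof
      fix p assume "p \<in> ordered_pairs I"
      then show "(\<omega> (fst p, fst p) + \<omega> (snd p, snd p)) / 2 \<le> \<omega> p"
        using H[rule_format, of "fst p" "snd p"] by (auto simp: ordered_pairs_def sym_entry_def)
    qed
  next
    assume K: "Kset_on I \<omega>"
    show "\<forall>i\<in>I. \<forall>j\<in>I. i \<noteq> j \<longrightarrow> (sym_entry \<omega> i i + sym_entry \<omega> j j) / 2 \<le> sym_entry \<omega> i j"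
    proof (intro ballI impI)
      fix i j assume "i \<in> I" "j \<in> I" "i \<noteq> j"
      then have "(min i j, max i j) \<in> ordered_pairs I"
        by (auto simp: ordered_pairs_def min_def max_def)
      then show "(sym_entry \<omega> i i + sym_entry \<omega> j j) / 2 \<le> sym_entry \<omega> i j"
        using K unfolding Kset_on_def sym_entry_def
        by (cases "i \<le> j") (auto simp: min_def max_def add.commute)
    qed
  qed
  then show ?thesis unfolding is_Kset_def by auto
qed

lemma Kset_on_merge_le:
  assumes "I \<subseteq> {1..n}" "Kset_on I (merge (diag_idx n) (offdiag_idx n) (x, y))" "p \<in> ordered_pairs I"
  shows "(x (fst p, fst p) + x (snd p, snd p)) / 2 \<le> y p"
proof -
  have "(fst p, fst p) \<in> diag_idx n" "(snd p, snd p) \<in> diag_idx n" "p \<in> offdiag_idx n - diag_idx n"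
    using assms(1,3) ordered_pairs_subset_offdiag_idx[OF assms(1)]
    by (auto simp: ordered_pairs_def diag_idx_def)
  then show ?thesis
    using assms(2,3) by (auto simp: Kset_on_def merge_def)
qed

lemma L_max_less_iff:
  "L_max n \<omega> < k \<longleftrightarrow> (\<forall>I. I \<subseteq> {1..n} \<longrightarrow> card I = k \<longrightarrow> \<not> Kset_on I \<omega>)"
proof -
  let ?S = "{card I | I. is_Kset n \<omega> I}"
  have "?S \<subseteq> card ` Pow {1..n}" by (auto simp: is_Kset_def)
  hence "finite ?S" by (rule finite_subset) simp
  moreover have "?S \<noteq> {}" using is_Kset_iff[of n \<omega> "{}"] by (auto simp: Kset_on_def ordered_pairs_def)
  ultimately have "L_max n \<omega> < k \<longleftrightarrow> (\<forall>J. is_Kset n \<omega> J \<longrightarrow> card J < k)"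
    unfolding L_max_def by (subst Max_less_iff) auto
  also have "\<dots> \<longleftrightarrow> (\<forall>I. I \<subseteq> {1..n} \<longrightarrow> card I = k \<longrightarrow> \<not> Kset_on I \<omega>)"
  proof
    assume small: "\<forall>J. is_Kset n \<omega> J \<longrightarrow> card J < k"
    then show "\<forall>I. I \<subseteq> {1..n} \<longrightarrow> card I = k \<longrightarrow> \<not> Kset_on I \<omega>"
      by (auto simp: is_Kset_iff)
  next
    assume none: "\<forall>I. I \<subseteq> {1..n} \<longrightarrow> card I = k \<longrightarrow> \<not> Kset_on I \<omega>"
    show "\<forall>J. is_Kset n \<omega> J \<longrightarrow> card J < k"
    proof (intro allI impI)
      fix J assume J: "is_Kset n \<omega> J"
      show "card J < k"
      proof (rule ccontr)
        assume "\<not> card J < k"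
        then obtain I where "I \<subseteq> J" "card I = k"
          using obtain_subset_with_card_n[of k J] by auto
        moreover have "I \<subseteq> {1..n}" "Kset_on I \<omega>"
          using J \<open>I \<subseteq> J\<close> Kset_on_subset by (auto simp: is_Kset_iff)
        ultimately show False using none by blast
      qed
    qed
  qed
  finally show ?thesis .
qed

lemma Kset_on_sets:
  assumes M: "sets M = sets borel" and I: "I \<subseteq> {1..n}"
  shows "{\<omega> \<in> space (PiM (entry_idx n) (\<lambda>_. M)). Kset_on I \<omega>} \<in> sets (PiM (entry_idx n) (\<lambda>_. M))"
proof -
  let ?P = "PiM (entry_idx n) (\<lambda>_. M)"
  have comp: "(\<lambda>\<omega>. \<omega> q) \<in> borel_measurable ?P" if "q \<in> entry_idx n" for q
    using measurable_component_singleton[OF that, of "\<lambda>_. M"] measurable_cong_sets[OF refl M] by blast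
  have "finite I" using I finite_subset by auto
  show ?thesis unfolding Kset_on_def
  proof (rule sets.sets_Collect_finite_All[OF _ finite_ordered_pairs[OF \<open>finite I\<close>]])
    fix p assume "p \<in> ordered_pairs I"
    then have "p \<in> entry_idx n" "(fst p, fst p) \<in> entry_idx n" "(snd p, snd p) \<in> entry_idx n"
      using I by (auto simp: ordered_pairs_def entry_idx_def)
    note [measurable] = comp[OF this(1)] comp[OF this(2)] comp[OF this(3)]
    show "{\<omega> \<in> space ?P. (\<omega> (fst p, fst p) + \<omega> (snd p, snd p)) / 2 \<le> \<omega> p} \<in> sets ?P"
      by measurable
  qed
qed

lemma L_max_less_sets:
  assumes "sets M = sets borel"
  shows "{\<omega> \<in> space (PiM (entry_idx n) (\<lambda>_. M)). L_max n \<omega> < k} \<in> sets (PiM (entry_idx n) (\<lambda>_. M))"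
proof -
  let ?P = "PiM (entry_idx n) (\<lambda>_. M)" and ?S = "{I. I \<subseteq> {1..n} \<and> card I = k}"
  have "{\<omega> \<in> space ?P. L_max n \<omega> < k} = {\<omega> \<in> space ?P. \<forall>I\<in>?S. \<not> Kset_on I \<omega>}"
    by (auto simp: L_max_less_iff)
  also have "\<dots> \<in> sets ?P"
    using Kset_on_sets[OF assms] by (intro sets.sets_Collect_finite_All sets.sets_Collect_neg) auto
  finally show ?thesis .
qed

section \<open>Decay of the first-moment bound\<close>

lemma first_moment_bound_le_exp:
  fixes C \<beta> s :: real and k n :: nat
  assumes C: "0 < C" and \<beta>: "0 \<le> \<beta>" and s: "s = sqrt (real n)" "1 < C * s"
    and k: "C * s \<le> real k"
  shows "2 * (1 + 2 * \<beta> / (real k - 1)) ^ n / sqrt 3 ^ k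
           \<le> 2 * exp (2 * \<beta> / C * s / (C * s - 1) - (C * ln 3 / 2 - 2 * \<beta> / C) * s)"
proof -
  have k1: "C * s - 1 \<le> real k - 1" using k by simp
  have n: "real n = s\<^sup>2" using s(1) by simp
  have "(1 + 2 * \<beta> / (real k - 1)) ^ n \<le> exp (2 * \<beta> / (real k - 1)) ^ n"
    using s k1 \<beta> by (intro power_mono) auto
  also have "\<dots> \<le> exp (real n * (2 * \<beta> / (C * s - 1)))"
    using s k1 \<beta> by (simp add: exp_of_nat_mult[symmetric] mult_left_mono frac_le)
  finally have num: "(1 + 2 * \<beta> / (real k - 1)) ^ n \<le> exp (real n * (2 * \<beta> / (C * s - 1)))" .
  have "exp (C * s * (ln 3 / 2)) \<le> exp (real k * (ln 3 / 2))"
    using k by simp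
  also have "\<dots> = sqrt 3 ^ k"
    by (simp add: exp_of_nat_mult[symmetric] powr_half_sqrt[symmetric] powr_def)
  finally have den: "exp (C * s * (ln 3 / 2)) \<le> sqrt 3 ^ k" .
  have "2 * (1 + 2 * \<beta> / (real k - 1)) ^ n / sqrt 3 ^ k
      \<le> 2 * exp (real n * (2 * \<beta> / (C * s - 1))) / exp (C * s * (ln 3 / 2))"
    using num den by (intro frac_le mult_left_mono) auto
  also have "\<dots> = 2 * exp (real n * (2 * \<beta> / (C * s - 1)) - C * s * (ln 3 / 2))"
    by (simp add: exp_diff)
  also have "real n * (2 * \<beta> / (C * s - 1)) - C * s * (ln 3 / 2)
      = 2 * \<beta> / C * s / (C * s - 1) - (C * ln 3 / 2 - 2 * \<beta> / C) * s"
    using n s(2) C by (simp add: field_simps power2_eq_square)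
  finally show ?thesis .
qed

lemma first_moment_bound_tendsto_zero:
  fixes C \<beta> :: real and k :: "nat \<Rightarrow> nat"
  assumes C: "0 < C" and \<beta>: "0 \<le> \<beta>" and C_large: "4 * \<beta> / ln 3 < C\<^sup>2"
    and k: "\<And>n. C * sqrt (real n) \<le> real (k n)"
  shows "(\<lambda>n. 2 * (1 + 2 * \<beta> / (real (k n) - 1)) ^ n / sqrt 3 ^ k n) \<longlonglongrightarrow> 0"
proof (rule tendsto_sandwich[OF _ _ tendsto_const])
  define \<eta> where "\<eta> = C * ln 3 / 2 - 2 * \<beta> / C"
  have "0 < \<eta>"
    using C C_large by (simp add: \<eta>_def field_simps power2_eq_square)
  then show "(\<lambda>n. 2 * exp (2 * \<beta> / C * sqrt (real n) / (C * sqrt (real n) - 1) - \<eta> * sqrt (real n)))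
               \<longlonglongrightarrow> 0"
    using C \<beta> by real_asymp
  have large: "\<forall>\<^sub>F n in sequentially. 1 < C * sqrt (real n)"
    using C by real_asymp
  then show "\<forall>\<^sub>F n in sequentially. 2 * (1 + 2 * \<beta> / (real (k n) - 1)) ^ n / sqrt 3 ^ k n
      \<le> 2 * exp (2 * \<beta> / C * sqrt (real n) / (C * sqrt (real n) - 1) - \<eta> * sqrt (real n))"
    by eventually_elim (use C \<beta> k first_moment_bound_le_exp in \<open>simp add: \<eta>_def\<close>)
  from large show "\<forall>\<^sub>F n in sequentially. 0 \<le> 2 * (1 + 2 * \<beta> / (real (k n) - 1)) ^ n / sqrt 3 ^ k n"
  proof eventually_elim
    case (elim n)
    then have "1 < real (k n)" using k[of n] by linarith
    then show ?case using \<beta> by simp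
  qed
qed

lemma of_nat_le_iff_less_nat_floor:
  fixes x :: real
  assumes "0 \<le> x"
  shows "real m \<le> x \<longleftrightarrow> m < nat \<lfloor>x\<rfloor> + 1"
proof -
  have "real m \<le> x \<longleftrightarrow> int m \<le> \<lfloor>x\<rfloor>" by (simp add: le_floor_iff)
  also have "\<dots> \<longleftrightarrow> m \<le> nat \<lfloor>x\<rfloor>" using assms by (simp add: le_nat_iff)
  finally show ?thesis by linarith
qed

section \<open>Distributions with a non-increasing density\<close>

locale monotone_density =
  fixes g :: "real \<Rightarrow> real"
  assumes g_pos: "\<forall>x\<in>{0..1}. g x > 0"
    and g_noninc: "\<forall>x y. 0 \<le> x \<longrightarrow> x \<le> y \<longrightarrow> y \<le> 1 \<longrightarrow> g y \<le> g x"
    and g_cont: "continuous_on {0..1} g"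
    and g_total: "integral {0..1} g = 1"
begin

lemma g_integrable_on: "0 \<le> a \<Longrightarrow> b \<le> 1 \<Longrightarrow> g integrable_on {a..b}"
  by (rule integrable_continuous_real, rule continuous_on_subset[OF g_cont]) auto

lemma cdf_of_diff:
  assumes "0 \<le> a" "a \<le> b" "b \<le> 1"
  shows "cdf_of g b - cdf_of g a = integral {a..b} g"
proof -
  have "integral {0..a} g + integral {a..b} g = integral {0..b} g"
    by (rule Henstock_Kurzweil_Integration.integral_combine) (use assms g_integrable_on in auto)
  then show ?thesis unfolding cdf_of_def by simp
qed

lemma integral_g_bounds:
  assumes "0 \<le> a" "a \<le> b" "b \<le> 1"
  shows "(b - a) * g b \<le> integral {a..b} g" "integral {a..b} g \<le> (b - a) * g a"
proof -
  have "integral {a..b} (\<lambda>x. g b) \<le> integral {a..b} g"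
    by (rule integral_le) (use assms g_integrable_on g_noninc in auto)
  then show "(b - a) * g b \<le> integral {a..b} g" using assms by simp
  have "integral {a..b} g \<le> integral {a..b} (\<lambda>x. g a)"
    by (rule integral_le) (use assms g_integrable_on g_noninc in auto)
  then show "integral {a..b} g \<le> (b - a) * g a" using assms by simp
qed

lemma cdf_of_0: "cdf_of g 0 = 0"
  by (simp add: cdf_of_def)

lemma cdf_of_1: "cdf_of g 1 = 1"
  by (simp add: cdf_of_def g_total)

lemma cdf_of_mono: "0 \<le> x \<Longrightarrow> x \<le> y \<Longrightarrow> y \<le> 1 \<Longrightarrow> cdf_of g x \<le> cdf_of g y"
  using cdf_of_diff[of x y] integral_g_bounds(1)[of x y] g_pos
  by (smt (verit) atLeastAtMost_iff mult_nonneg_nonneg)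

text \<open>The distribution function, continued linearly with slope \<open>g 0\<close> to the left of \<open>0\<close> and by
  \<open>1\<close> to the right of \<open>1\<close>; since \<open>g\<close> is non-increasing, this extension is concave on all of \<open>\<real>\<close>.\<close>
definition cdf_ext :: "real \<Rightarrow> real" where
  "cdf_ext x = (if x < 0 then g 0 * x else if x \<le> 1 then cdf_of g x else 1)"

lemma cdf_ext_le_1: "cdf_ext x \<le> 1"
  using cdf_of_mono[of x 1] cdf_of_1 g_pos mult_pos_neg[of "g 0" x] unfolding cdf_ext_def by auto

lemma cdf_ext_mono: "mono cdf_ext"
proof
  fix x y :: real assume xy: "x \<le> y"
  have cdf01: "0 \<le> cdf_of g z" "cdf_of g z \<le> 1" if "0 \<le> z" "z \<le> 1" for z
    using cdf_of_mono[of 0 z] cdf_of_mono[of z 1] that cdf_of_0 cdf_of_1 by auto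
  have neg: "g 0 * z < 0" if "z < 0" for z using g_pos that by (simp add: mult_pos_neg)
  consider "y < 0" | "x < 0" "0 \<le> y" | "0 \<le> x" by linarith
  then show "cdf_ext x \<le> cdf_ext y"
  proof cases
    case 1
    then show ?thesis using xy g_pos by (simp add: cdf_ext_def)
  next
    case 2
    then show ?thesis using neg[of x] cdf01[of y] by (auto simp: cdf_ext_def)
  next
    case 3
    then show ?thesis using xy cdf01[of x] cdf_of_mono[of x y] by (auto simp: cdf_ext_def)
  qed
qed

lemma cdf_ext_le_tangent:
  assumes "0 \<le> m" "m \<le> 1"
  shows "cdf_ext x \<le> cdf_of g m + g m * (x - m)"
proof -
  have gm: "0 < g m" "g m \<le> g 0" using g_pos g_noninc assms by auto
  consider "x < 0" | "0 \<le> x" "x \<le> m" | "m \<le> x" "x \<le> 1" | "1 < x" by linarith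
  then show ?thesis
  proof cases
    case 1
    have "m * g m \<le> cdf_of g m"
      using integral_g_bounds(1)[of 0 m] cdf_of_diff[of 0 m] cdf_of_0 assms by (simp add: mult.commute)
    moreover have "g 0 * x \<le> g m * x" using 1 gm by (intro mult_right_mono_neg) auto
    moreover have "cdf_ext x = g 0 * x" using 1 by (simp add: cdf_ext_def)
    ultimately show ?thesis by (simp add: algebra_simps)
  next
    case 2
    have "(m - x) * g m \<le> cdf_of g m - cdf_of g x"
      using integral_g_bounds(1)[of x m] cdf_of_diff[of x m] 2 assms by simp
    then show ?thesis using 2 assms by (simp add: cdf_ext_def algebra_simps)
  next
    case 3
    have "cdf_of g x - cdf_of g m \<le> (x - m) * g m"
      using integral_g_bounds(2)[of m x] cdf_of_diff[of m x] 3 assms by simp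
    then show ?thesis using 3 assms by (simp add: cdf_ext_def algebra_simps)
  next
    case 4
    have "cdf_of g 1 - cdf_of g m \<le> (1 - m) * g m"
      using integral_g_bounds(2)[of m 1] cdf_of_diff[of m 1] assms by simp
    moreover have "(1 - m) * g m \<le> (x - m) * g m" using 4 gm by (intro mult_right_mono) auto
    ultimately show ?thesis using 4 cdf_of_1 by (simp add: cdf_ext_def algebra_simps)
  qed
qed

lemma cdf_ext_midpoint_concave: "(cdf_ext a + cdf_ext b) / 2 \<le> cdf_ext ((a + b) / 2)"
proof -
  define m where "m = (a + b) / 2"
  consider "m < 0" | "0 \<le> m" "m \<le> 1" | "1 < m" by linarith
  then have "(cdf_ext a + cdf_ext b) / 2 \<le> cdf_ext m"
  proof cases
    case 1
    have "cdf_ext x \<le> g 0 * x" for x using cdf_ext_le_tangent[of 0 x] cdf_of_0 by simp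
    from this[of a] this[of b] show ?thesis
      using 1 by (simp add: cdf_ext_def m_def algebra_simps)
  next
    case 2
    have "cdf_ext m = cdf_of g m" using 2 by (simp add: cdf_ext_def)
    moreover have "g m * (a - m) + g m * (b - m) = 0" by (simp add: m_def algebra_simps)
    ultimately show ?thesis
      using cdf_ext_le_tangent[OF 2, of a] cdf_ext_le_tangent[OF 2, of b] by argo
  next
    case 3
    then show ?thesis using cdf_ext_le_1[of a] cdf_ext_le_1[of b] by (simp add: cdf_ext_def)
  qed
  then show ?thesis by (simp add: m_def)
qed

lemma density_nonneg: "0 \<le> indicator {0..1} x * g x"
  using g_pos by (auto simp: indicator_def less_imp_le)

lemma density_borel_measurable [measurable]: "(\<lambda>x. indicator {0..1} x * g x) \<in> borel_measurable borel"
proof -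
  have "(\<lambda>x. indicator {0..1} x *\<^sub>R g x) \<in> borel_measurable borel"
    by (rule borel_measurable_continuous_on_indicator) (auto simp: g_cont)
  then show ?thesis by simp
qed

lemma sets_dens_distr [simp]: "sets (dens_distr g) = sets borel"
  by (simp add: dens_distr_def)

lemma measurable_dens_distr [simp]: "measurable (dens_distr g) N = measurable borel N"
  by (rule measurable_cong_sets) auto

lemma nn_integral_dens_distr:
  assumes h: "h \<in> borel_measurable borel" "\<And>x. 0 \<le> h x"
    and I: "((\<lambda>x. g x * h x) has_integral I) {0..1}"
  shows "(\<integral>\<^sup>+x. ennreal (h x) \<partial>dens_distr g) = ennreal I"
proof -
  have "(\<integral>\<^sup>+x. ennreal (h x) \<partial>dens_distr g) = (\<integral>\<^sup>+x. ennreal (indicator {0..1} x * g x * h x) \<partial>lborel)"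
    unfolding dens_distr_def using h density_nonneg
    by (subst nn_integral_density) (auto simp: ennreal_mult)
  also have "\<dots> = ennreal I"
  proof (rule nn_integral_has_integral_lborel)
    have "(\<lambda>x. indicator {0..1} x * g x * h x) = (\<lambda>x. if x \<in> {0..1} then g x * h x else 0)"
      by (auto simp: indicator_def)
    then show "((\<lambda>x. indicator {0..1} x * g x * h x) has_integral I) UNIV"
      using I by (simp only: has_integral_restrict_UNIV)
  qed (use h density_nonneg in auto)
  finally show ?thesis .
qed

lemma has_integral_g: "(g has_integral 1) {0..1}"
  using integrable_integral[OF g_integrable_on[of 0 1]] g_total by simp

lemma prob_space_dens_distr: "prob_space (dens_distr g)"
proof
  have "(\<integral>\<^sup>+x. ennreal 1 \<partial>dens_distr g) = ennreal 1"
    by (rule nn_integral_dens_distr) (use has_integral_g in auto)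
  then show "emeasure (dens_distr g) (space (dens_distr g)) = 1" by simp
qed

lemma measure_atLeast_le: "measure (dens_distr g) {m..} \<le> 1 - cdf_ext m"
proof -
  interpret prob_space "dens_distr g" by (rule prob_space_dens_distr)
  consider "m < 0" | "0 \<le> m" "m \<le> 1" | "1 < m" by linarith
  then show ?thesis
  proof cases
    case 1
    then have "cdf_ext m < 0" using g_pos mult_pos_neg[of "g 0" m] by (simp add: cdf_ext_def)
    then show ?thesis using prob_le_1[of "{m..}"] by linarith
  next
    case 2
    have "((\<lambda>x. g x * indicator {m..} x) has_integral integral {m..1} g) {0..1}"
    proof -
      have "(g has_integral integral {m..1} g) {m..1}" using g_integrable_on[of m 1] 2 by (simp add: integrable_integral)
      then have "((\<lambda>x. if x \<in> {m..1} then g x else 0) has_integral integral {m..1} g) {0..1}"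
        using 2 by (subst has_integral_restrict) auto
      then show ?thesis by (rule has_integral_eq[rotated]) (auto simp: indicator_def)
    qed
    then have "(\<integral>\<^sup>+x. ennreal (indicator {m..} x) \<partial>dens_distr g) = ennreal (integral {m..1} g)"
      by (intro nn_integral_dens_distr) auto
    then have "emeasure (dens_distr g) {m..} = ennreal (integral {m..1} g)"
      by (simp add: ennreal_indicator)
    moreover have "integral {m..1} g = 1 - cdf_ext m"
      using cdf_of_diff[of m 1] cdf_of_1 2 by (simp add: cdf_ext_def)
    ultimately show ?thesis using 2 cdf_ext_le_1[of m] by (simp add: emeasure_eq_measure)
  next
    case 3
    have "emeasure (dens_distr g) {m..} = (\<integral>\<^sup>+x. ennreal (indicator {0..1} x * g x) * indicator {m..} x \<partial>lborel)"
      unfolding dens_distr_def by (rule emeasure_density) auto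
    also have "\<dots> = 0"
      using 3 by (intro nn_integral_zero' AE_I2) (auto simp: indicator_def)
    finally show ?thesis using 3 by (simp add: emeasure_eq_measure cdf_ext_def)
  qed
qed

lemma measure_atLeast_midpoint_le:
  "measure (dens_distr g) {(a + b) / 2..} \<le> exp (- ((cdf_ext a + cdf_ext b) / 2))"
proof -
  have "measure (dens_distr g) {(a + b) / 2..} \<le> 1 - (cdf_ext a + cdf_ext b) / 2"
    using measure_atLeast_le cdf_ext_midpoint_concave[of a b] by (smt (verit))
  also have "\<dots> \<le> exp (- ((cdf_ext a + cdf_ext b) / 2))"
    using exp_ge_add_one_self[of "- ((cdf_ext a + cdf_ext b) / 2)"] by simp
  finally show ?thesis .
qed

text \<open>After substituting \<open>s = a cdf(x)\<close>, the integrand minus \<open>g\<close> is the derivative of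
  \<open>weight_primitive (a cdf(x)) / a\<close>.\<close>
lemma nn_integral_weight:
  assumes "0 < a"
  shows "(\<integral>\<^sup>+x. ennreal (weight (a * cdf_ext x)) \<partial>dens_distr g)
           = ennreal (1 + (weight_primitive a - weight_primitive 0) / a)"
proof (rule nn_integral_dens_distr)
  show "(\<lambda>x. weight (a * cdf_ext x)) \<in> borel_measurable borel"
    using borel_measurable_mono[OF cdf_ext_mono] unfolding weight_def by measurable
  show "\<And>x. 0 \<le> weight (a * cdf_ext x)"
    using weight_ge_1 by (meson order_trans zero_le_one)
  have "((\<lambda>x. (weight (a * cdf_of g x) - 1) * (a * g x)) has_integral
          (weight_primitive (a * cdf_of g 1) - weight_primitive (a * cdf_of g 0))) {0..1}"
  proof (rule fundamental_theorem_of_calculus)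
    fix x :: real assume x: "x \<in> {0..1}"
    have "(cdf_of g has_real_derivative g x) (at x within {0..1})"
      using integral_has_vector_derivative[OF g_cont x]
      unfolding cdf_of_def[abs_def] has_real_derivative_iff_has_vector_derivative .
    then have "((\<lambda>x. weight_primitive (a * cdf_of g x)) has_real_derivative
                 (weight (a * cdf_of g x) - 1) * (a * g x)) (at x within {0..1})"
      by (intro DERIV_chain2[OF weight_primitive_has_derivative] DERIV_cmult)
    then show "((\<lambda>x. weight_primitive (a * cdf_of g x)) has_vector_derivative
                 (weight (a * cdf_of g x) - 1) * (a * g x)) (at x within {0..1})"
      by (simp add: has_real_derivative_iff_has_vector_derivative)
  qed simp
  then have "((\<lambda>x. g x + (1/a) * ((weight (a * cdf_of g x) - 1) * (a * g x))) has_integral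
               (1 + (1/a) * (weight_primitive a - weight_primitive 0))) {0..1}"
    using cdf_of_0 cdf_of_1 by (intro has_integral_add[OF has_integral_g] has_integral_mult_right) simp
  then have "((\<lambda>x. g x + (1/a) * ((weight (a * cdf_of g x) - 1) * (a * g x))) has_integral
               (1 + (weight_primitive a - weight_primitive 0) / a)) {0..1}"
    by simp
  then show "((\<lambda>x. g x * weight (a * cdf_ext x)) has_integral
               1 + (weight_primitive a - weight_primitive 0) / a) {0..1}"
    by (rule has_integral_eq[rotated]) (use assms in \<open>auto simp: cdf_ext_def field_simps\<close>)
qed

section \<open>The weighted first moment\<close>

definition tail_weight :: "nat \<Rightarrow> real \<Rightarrow> real" where
  "tail_weight k y = exp (- ((real k - 1) / 2 * cdf_ext y))"

definition diag_weight :: "nat \<Rightarrow> real \<Rightarrow> real" where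
  "diag_weight k y = weight ((real k - 1) / 2 * cdf_ext y)"

definition diag_weight_prod :: "nat \<Rightarrow> nat \<Rightarrow> (nat \<times> nat \<Rightarrow> real) \<Rightarrow> real" where
  "diag_weight_prod n k x = (\<Prod>i\<in>{1..n}. diag_weight k (x (i, i)))"

definition weight_mean :: "nat \<Rightarrow> real" where
  "weight_mean k = 1 + (weight_primitive ((real k - 1) / 2) - weight_primitive 0) / ((real k - 1) / 2)"

lemma diag_weight_sq: "(diag_weight k y)\<^sup>2 = 1 + 3 * tail_weight k y"
  by (simp add: diag_weight_def tail_weight_def weight_def add_nonneg_nonneg)

lemma diag_weight_ge_1: "1 \<le> diag_weight k y"
  by (simp add: diag_weight_def weight_ge_1)

lemma diag_weight_measurable [measurable]: "diag_weight k \<in> borel_measurable borel"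
  using borel_measurable_mono[OF cdf_ext_mono] unfolding diag_weight_def[abs_def] weight_def
  by measurable

lemma diag_weight_prod_pos: "0 < diag_weight_prod n k x"
  unfolding diag_weight_prod_def using diag_weight_ge_1
  by (intro prod_pos) (meson less_le_trans zero_less_one)

lemma diag_weight_prod_measurable:
  assumes "diag_idx n \<subseteq> J"
  shows "diag_weight_prod n k \<in> borel_measurable (PiM J (\<lambda>_. dens_distr g))"
  unfolding diag_weight_prod_def[abs_def]
proof (rule borel_measurable_prod)
  fix i assume "i \<in> {1..n}"
  then have "(i, i) \<in> J" using assms by (auto simp: diag_idx_def)
  then show "(\<lambda>x. diag_weight k (x (i, i))) \<in> borel_measurable (PiM J (\<lambda>_. dens_distr g))"
    by (rule measurable_PiM_component_rev) simp
qed

lemma nn_integral_diag_weight: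
  "2 \<le> k \<Longrightarrow> (\<integral>\<^sup>+y. ennreal (diag_weight k y) \<partial>dens_distr g) = ennreal (weight_mean k)"
  unfolding diag_weight_def weight_mean_def by (rule nn_integral_weight) simp

lemma weight_mean_ge_1:
  assumes "2 \<le> k"
  shows "1 \<le> weight_mean k"
proof -
  interpret prob_space "dens_distr g" by (rule prob_space_dens_distr)
  have "(\<integral>\<^sup>+y. ennreal 1 \<partial>dens_distr g) \<le> (\<integral>\<^sup>+y. ennreal (diag_weight k y) \<partial>dens_distr g)"
    by (intro nn_integral_mono) (simp add: diag_weight_ge_1)
  then show ?thesis using nn_integral_diag_weight[OF assms] emeasure_space_1 by simp
qed

lemma weight_mean_le: "2 \<le> k \<Longrightarrow> weight_mean k \<le> 1 + 2 * beta_const / (real k - 1)"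
  using weight_primitive_diff_le[of "(real k - 1) / 2"]
  by (simp add: weight_mean_def divide_right_mono)

lemma nn_integral_diag_weight_prod:
  assumes "diag_idx n \<subseteq> J" "finite J" "2 \<le> k"
  shows "(\<integral>\<^sup>+x. ennreal (diag_weight_prod n k x) \<partial>PiM J (\<lambda>_. dens_distr g)) = ennreal (weight_mean k ^ n)"
proof -
  interpret product_sigma_finite "\<lambda>_::nat \<times> nat. dens_distr g"
    using prob_space_dens_distr prob_space_imp_sigma_finite by (auto simp: product_sigma_finite_def)
  interpret prob_space "dens_distr g" by (rule prob_space_dens_distr)
  let ?f = "\<lambda>p t. ennreal (if p \<in> diag_idx n then diag_weight k t else 1)"
  have "diag_weight_prod n k x = (\<Prod>p\<in>diag_idx n. diag_weight k (x p))" for x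
    unfolding diag_idx_def diag_weight_prod_def by (subst prod.reindex) (auto simp: inj_on_def)
  also have "\<dots> x = (\<Prod>p\<in>J. if p \<in> diag_idx n then diag_weight k (x p) else 1)" for x
    using assms by (intro prod.mono_neutral_cong_left) auto
  finally have "ennreal (diag_weight_prod n k x) = (\<Prod>p\<in>J. ?f p (x p))" for x
    using diag_weight_ge_1 by (simp only:) (intro prod_ennreal[symmetric], auto intro: order_trans[OF zero_le_one])
  then have "(\<integral>\<^sup>+x. ennreal (diag_weight_prod n k x) \<partial>PiM J (\<lambda>_. dens_distr g))
      = (\<integral>\<^sup>+x. (\<Prod>p\<in>J. ?f p (x p)) \<partial>PiM J (\<lambda>_. dens_distr g))"
    by simp
  also have "\<dots> = (\<Prod>p\<in>J. \<integral>\<^sup>+t. ?f p t \<partial>dens_distr g)"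
    by (rule product_nn_integral_prod[OF assms(2)]) simp
  also have "\<dots> = (\<Prod>p\<in>diag_idx n. ennreal (weight_mean k))"
    using assms nn_integral_diag_weight[OF assms(3)] emeasure_space_1
    by (intro prod.mono_neutral_cong_right) auto
  also have "\<dots> = ennreal (weight_mean k ^ n)"
    using card_diag_idx[of n] weight_mean_ge_1[OF assms(3)] by (simp add: ennreal_power)
  finally show ?thesis .
qed

text \<open>Conditionally on the diagonal \<open>x\<close>, the events \<open>f(i,j) \<ge> (x(i,i) + x(j,j)) / 2\<close> are
  independent, and each has probability at most \<open>exp (- (cdf_ext x(i,i) + cdf_ext x(j,j)) / 2)\<close>.\<close>
lemma nn_integral_Kset_on_offdiag_le:
  assumes I: "I \<subseteq> {1..n}" "card I = k"
  shows "(\<integral>\<^sup>+y. (if Kset_on I (merge (diag_idx n) (offdiag_idx n) (x, y)) then a else 0)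
            \<partial>PiM (offdiag_idx n) (\<lambda>_. dens_distr g))
         \<le> a * ennreal (\<Prod>i\<in>I. tail_weight k (x (i, i)))"
proof -
  interpret product_sigma_finite "\<lambda>_::nat \<times> nat. dens_distr g"
    using prob_space_dens_distr prob_space_imp_sigma_finite by (auto simp: product_sigma_finite_def)
  interpret prob_space "dens_distr g" by (rule prob_space_dens_distr)
  let ?Off = "offdiag_idx n" and ?P = "ordered_pairs I"
  define mid where "mid p = (x (fst p, fst p) + x (snd p, snd p)) / 2" for p
  define psi where "psi p = (if p \<in> ?P then indicator {mid p..} else (\<lambda>_. 1 :: ennreal))" for p
  have "finite I" using I(1) finite_subset by auto
  have P_sub: "?P \<subseteq> ?Off" by (rule ordered_pairs_subset_offdiag_idx[OF I(1)])
  have psi_measurable: "psi p \<in> borel_measurable (dens_distr g)" for p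
    by (simp add: psi_def)
  have "(if Kset_on I (merge (diag_idx n) ?Off (x, y)) then a else 0) \<le> a * (\<Prod>p\<in>?Off. psi p (y p))" for y
  proof (cases "Kset_on I (merge (diag_idx n) ?Off (x, y))")
    case True
    then have "psi p (y p) = 1" for p
      using Kset_on_merge_le[OF I(1) True] by (simp add: psi_def mid_def)
    then show ?thesis using True by simp
  qed simp
  then have "(\<integral>\<^sup>+y. (if Kset_on I (merge (diag_idx n) ?Off (x, y)) then a else 0) \<partial>PiM ?Off (\<lambda>_. dens_distr g))
      \<le> (\<integral>\<^sup>+y. a * (\<Prod>p\<in>?Off. psi p (y p)) \<partial>PiM ?Off (\<lambda>_. dens_distr g))"
    by (intro nn_integral_mono) simp
  also have "\<dots> = a * (\<Prod>p\<in>?Off. \<integral>\<^sup>+t. psi p t \<partial>dens_distr g)"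
    using psi_measurable
    by (simp add: nn_integral_cmult product_nn_integral_prod[OF finite_offdiag_idx]
        borel_measurable_prod_ennreal measurable_PiM_component_rev)
  also have "(\<Prod>p\<in>?Off. \<integral>\<^sup>+t. psi p t \<partial>dens_distr g)
      = (\<Prod>p\<in>?Off. ennreal (if p \<in> ?P then measure (dens_distr g) {mid p..} else 1))"
    using prob_space by (intro prod.cong refl) (auto simp: psi_def emeasure_eq_measure)
  also have "\<dots> = ennreal (\<Prod>p\<in>?Off. if p \<in> ?P then measure (dens_distr g) {mid p..} else 1)"
    by (rule prod_ennreal) auto
  also have "\<dots> \<le> ennreal (\<Prod>p\<in>?Off. if p \<in> ?P then exp (- ((cdf_ext (x (fst p, fst p)) + cdf_ext (x (snd p, snd p))) / 2)) else 1)"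
    using measure_atLeast_midpoint_le by (intro ennreal_leI prod_mono) (auto simp: mid_def)
  also have "(\<Prod>p\<in>?Off. if p \<in> ?P then exp (- ((cdf_ext (x (fst p, fst p)) + cdf_ext (x (snd p, snd p))) / 2)) else 1)
      = (\<Prod>p\<in>?P. exp (- ((cdf_ext (x (fst p, fst p)) + cdf_ext (x (snd p, snd p))) / 2)))"
    using P_sub by (intro prod.mono_neutral_cong_right finite_offdiag_idx) auto
  also have "\<dots> = (\<Prod>i\<in>I. tail_weight k (x (i, i)))"
    using prod_ordered_pairs_exp[OF \<open>finite I\<close>, of "\<lambda>i. cdf_ext (x (i, i))"] I(2)
    by (simp add: tail_weight_def)
  finally show ?thesis by (simp add: mult_left_mono)
qed

lemma nn_integral_Kset_on_weighted_le:
  assumes I: "I \<subseteq> {1..n}" "card I = k" and c: "0 \<le> c"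
  shows "(\<integral>\<^sup>+\<omega>. (if Kset_on I \<omega> then ennreal (c / diag_weight_prod n k \<omega>) else 0)
            \<partial>PiM (entry_idx n) (\<lambda>_. dens_distr g))
         \<le> (\<integral>\<^sup>+x. ennreal (c / diag_weight_prod n k x * (\<Prod>i\<in>I. tail_weight k (x (i, i))))
            \<partial>PiM (diag_idx n) (\<lambda>_. dens_distr g))"
proof -
  interpret product_sigma_finite "\<lambda>_::nat \<times> nat. dens_distr g"
    using prob_space_dens_distr prob_space_imp_sigma_finite by (auto simp: product_sigma_finite_def)
  let ?D = "diag_idx n" and ?Off = "offdiag_idx n" and ?Z = "diag_weight_prod n k"
  define F where "F \<omega> = (if Kset_on I \<omega> then ennreal (c / ?Z \<omega>) else 0)" for \<omega>
  have [measurable]: "?Z \<in> borel_measurable (PiM (entry_idx n) (\<lambda>_. dens_distr g))"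
    by (rule diag_weight_prod_measurable) (simp add: entry_idx_eq)
  have "F \<in> borel_measurable (PiM (entry_idx n) (\<lambda>_. dens_distr g))"
    unfolding F_def by (rule measurable_If[OF _ _ Kset_on_sets[OF sets_dens_distr I(1)]]) measurable
  then have "(\<integral>\<^sup>+\<omega>. F \<omega> \<partial>PiM (entry_idx n) (\<lambda>_. dens_distr g))
      = (\<integral>\<^sup>+x. (\<integral>\<^sup>+y. F (merge ?D ?Off (x, y)) \<partial>PiM ?Off (\<lambda>_. dens_distr g)) \<partial>PiM ?D (\<lambda>_. dens_distr g))"
    unfolding entry_idx_eq
    by (intro product_nn_integral_fold[OF diag_offdiag_disjoint finite_diag_idx finite_offdiag_idx])
      (simp add: entry_idx_eq)
  also have "\<dots> \<le> (\<integral>\<^sup>+x. ennreal (c / ?Z x * (\<Prod>i\<in>I. tail_weight k (x (i, i)))) \<partial>PiM ?D (\<lambda>_. dens_distr g))"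
  proof (rule nn_integral_mono)
    fix x
    have Z_merge: "?Z (merge ?D ?Off (x, y)) = ?Z x" for y
      unfolding diag_weight_prod_def by (intro prod.cong refl) (auto simp: merge_def diag_idx_def)
    have "(\<integral>\<^sup>+y. F (merge ?D ?Off (x, y)) \<partial>PiM ?Off (\<lambda>_. dens_distr g))
        = (\<integral>\<^sup>+y. (if Kset_on I (merge ?D ?Off (x, y)) then ennreal (c / ?Z x) else 0) \<partial>PiM ?Off (\<lambda>_. dens_distr g))"
      unfolding F_def Z_merge ..
    also have "\<dots> \<le> ennreal (c / ?Z x) * ennreal (\<Prod>i\<in>I. tail_weight k (x (i, i)))"
      by (rule nn_integral_Kset_on_offdiag_le[OF I])
    also have "\<dots> = ennreal (c / ?Z x * (\<Prod>i\<in>I. tail_weight k (x (i, i))))"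
      using c diag_weight_prod_pos[of n k x]
      by (simp add: ennreal_mult[symmetric] tail_weight_def prod_nonneg)
    finally show "(\<integral>\<^sup>+y. F (merge ?D ?Off (x, y)) \<partial>PiM ?Off (\<lambda>_. dens_distr g))
        \<le> ennreal (c / ?Z x * (\<Prod>i\<in>I. tail_weight k (x (i, i))))" .
  qed
  finally show ?thesis unfolding F_def .
qed

text \<open>This is where the shape of \<open>weight\<close> comes from: \<open>(\<Prod>i. 1 + 3 tail_weight) = diag_weight_prod\<^sup>2\<close>,
  and expanding the product dominates the sum over \<open>k\<close>-subsets.\<close>
lemma sum_Kset_weights_le:
  "(\<Sum>I | I \<subseteq> {1..n} \<and> card I = k.
      sqrt 3 ^ k / diag_weight_prod n k x * (\<Prod>i\<in>I. tail_weight k (x (i, i))))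
   \<le> diag_weight_prod n k x / sqrt 3 ^ k"
proof -
  let ?Z = "diag_weight_prod n k x" and ?c = "sqrt 3 ^ k"
  let ?s = "\<Sum>I | I \<subseteq> {1..n} \<and> card I = k. \<Prod>i\<in>I. tail_weight k (x (i, i))"
  have "?c\<^sup>2 * ?s \<le> (\<Prod>i\<in>{1..n}. 1 + 3 * tail_weight k (x (i, i)))"
    using sum_prod_card_subsets_le[of "{1..n}" "\<lambda>i. tail_weight k (x (i, i))" 3 k]
    by (simp add: tail_weight_def power_mult_distrib[symmetric] power2_eq_square flip: power_mult)
  also have "\<dots> = ?Z\<^sup>2"
    unfolding diag_weight_prod_def power2_eq_square prod.distrib[symmetric]
    by (simp add: diag_weight_sq[symmetric] power2_eq_square)
  finally have "?c\<^sup>2 * ?s \<le> ?Z\<^sup>2" .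
  then have "?c / ?Z * ?s \<le> ?Z / ?c"
    using diag_weight_prod_pos[of n k x] by (simp add: field_simps power2_eq_square)
  then show ?thesis by (simp add: sum_distrib_left)
qed

text \<open>If \<open>\<omega>\<close> has a K-set of size \<open>k\<close>, then either \<open>diag_weight_prod n k \<omega> \<ge> c\<close>, or that
  K-set alone contributes \<open>c / diag_weight_prod n k \<omega> > 1\<close>.\<close>
lemma indicator_L_max_ge_le:
  assumes "0 < c"
  shows "indicator {\<omega>. \<not> L_max n \<omega> < k} \<omega>
         \<le> ennreal (diag_weight_prod n k \<omega> / c)
           + (\<Sum>I | I \<subseteq> {1..n} \<and> card I = k.
                if Kset_on I \<omega> then ennreal (c / diag_weight_prod n k \<omega>) else 0)"
proof (cases "L_max n \<omega> < k")
  case False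
  then obtain I where I: "I \<subseteq> {1..n}" "card I = k" "Kset_on I \<omega>"
    using L_max_less_iff by blast
  have Z: "0 < diag_weight_prod n k \<omega>" by (rule diag_weight_prod_pos)
  show ?thesis
  proof (cases "c \<le> diag_weight_prod n k \<omega>")
    case True
    then have "indicator {\<omega>. \<not> L_max n \<omega> < k} \<omega> \<le> ennreal (diag_weight_prod n k \<omega> / c)"
      using assms by (simp add: indicator_def)
    then show ?thesis by (simp add: add_increasing2)
  next
    case small: False
    have "indicator {\<omega>. \<not> L_max n \<omega> < k} \<omega> \<le> ennreal (c / diag_weight_prod n k \<omega>)"
      using small Z by (simp add: indicator_def field_simps)
    also have "\<dots> = (if Kset_on I \<omega> then ennreal (c / diag_weight_prod n k \<omega>) else 0)"
      using I by simp
    also have "\<dots> \<le> (\<Sum>I | I \<subseteq> {1..n} \<and> card I = k.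
                      if Kset_on I \<omega> then ennreal (c / diag_weight_prod n k \<omega>) else 0)"
      by (rule member_le_sum) (use I in \<open>auto intro: finite_subset[of _ "Pow {1..n}"]\<close>)
    finally show ?thesis by (simp add: add_increasing)
  qed
qed simp

lemma tail_weight_measurable [measurable]: "tail_weight k \<in> borel_measurable borel"
  using borel_measurable_mono[OF cdf_ext_mono] unfolding tail_weight_def[abs_def] by measurable

lemma nn_integral_diag_weight_prod_divide:
  assumes "diag_idx n \<subseteq> J" "finite J" "2 \<le> k" "0 < c"
  shows "(\<integral>\<^sup>+x. ennreal (diag_weight_prod n k x / c) \<partial>PiM J (\<lambda>_. dens_distr g))
         = ennreal (weight_mean k ^ n / c)"
proof -
  have "(\<integral>\<^sup>+x. ennreal (diag_weight_prod n k x / c) \<partial>PiM J (\<lambda>_. dens_distr g))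
      = (\<integral>\<^sup>+x. ennreal (1 / c) * ennreal (diag_weight_prod n k x) \<partial>PiM J (\<lambda>_. dens_distr g))"
    using diag_weight_prod_pos assms(4) by (intro nn_integral_cong) (simp add: ennreal_mult[symmetric] less_imp_le)
  also have "\<dots> = ennreal (1 / c) * ennreal (weight_mean k ^ n)"
    using diag_weight_prod_measurable[OF assms(1)] nn_integral_diag_weight_prod[OF assms(1-3)]
    by (subst nn_integral_cmult) auto
  also have "\<dots> = ennreal (weight_mean k ^ n / c)"
    using weight_mean_ge_1[OF assms(3)] assms(4) by (simp add: ennreal_mult[symmetric])
  finally show ?thesis .
qed

lemma sum_nn_integral_Kset_on_le:
  assumes "2 \<le> k"
  shows "(\<Sum>I | I \<subseteq> {1..n} \<and> card I = k.
            \<integral>\<^sup>+\<omega>. (if Kset_on I \<omega> then ennreal (sqrt 3 ^ k / diag_weight_prod n k \<omega>) else 0)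
              \<partial>PiM (entry_idx n) (\<lambda>_. dens_distr g))
         \<le> ennreal (weight_mean k ^ n / sqrt 3 ^ k)"
proof -
  let ?D = "PiM (diag_idx n) (\<lambda>_. dens_distr g)" and ?S = "{I. I \<subseteq> {1..n} \<and> card I = k}"
  let ?c = "sqrt 3 ^ k" and ?Z = "diag_weight_prod n k"
  let ?h = "\<lambda>I x. ?c / ?Z x * (\<Prod>i\<in>I. tail_weight k (x (i, i)))"
  have h_nonneg: "0 \<le> ?h I x" for I x
    using diag_weight_prod_pos[of n k x]
    by (intro mult_nonneg_nonneg divide_nonneg_pos prod_nonneg) (auto simp: tail_weight_def)
  have [measurable]: "?Z \<in> borel_measurable ?D"
    by (rule diag_weight_prod_measurable) simp
  have h_measurable: "(\<lambda>x. ennreal (?h I x)) \<in> borel_measurable ?D" if "I \<in> ?S" for I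
  proof -
    have "(\<lambda>x. tail_weight k (x (i, i))) \<in> borel_measurable ?D" if "i \<in> I" for i
      using \<open>I \<in> ?S\<close> that
      by (intro measurable_PiM_component_rev) (auto simp: diag_idx_def)
    then have [measurable]: "(\<lambda>x. \<Prod>i\<in>I. tail_weight k (x (i, i))) \<in> borel_measurable ?D"
      by (rule borel_measurable_prod)
    show ?thesis by measurable
  qed
  have "(\<Sum>I\<in>?S. \<integral>\<^sup>+\<omega>. (if Kset_on I \<omega> then ennreal (?c / ?Z \<omega>) else 0) \<partial>PiM (entry_idx n) (\<lambda>_. dens_distr g))
      \<le> (\<Sum>I\<in>?S. \<integral>\<^sup>+x. ennreal (?h I x) \<partial>?D)"
    by (intro sum_mono nn_integral_Kset_on_weighted_le) auto
  also have "\<dots> = (\<integral>\<^sup>+x. (\<Sum>I\<in>?S. ennreal (?h I x)) \<partial>?D)"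
    using h_measurable by (rule nn_integral_sum[symmetric])
  also have "\<dots> \<le> (\<integral>\<^sup>+x. ennreal (?Z x / ?c) \<partial>?D)"
    using sum_Kset_weights_le h_nonneg by (intro nn_integral_mono) (simp add: sum_ennreal ennreal_leI)
  also have "\<dots> = ennreal (weight_mean k ^ n / ?c)"
    by (rule nn_integral_diag_weight_prod_divide[OF _ finite_diag_idx assms]) simp_all
  finally show ?thesis .
qed

lemma emeasure_L_max_ge_le:
  assumes "2 \<le> k"
  shows "emeasure (PiM (entry_idx n) (\<lambda>_. dens_distr g))
           {\<omega> \<in> space (PiM (entry_idx n) (\<lambda>_. dens_distr g)). \<not> L_max n \<omega> < k}
         \<le> ennreal (2 * weight_mean k ^ n / sqrt 3 ^ k)"
proof -
  let ?P = "PiM (entry_idx n) (\<lambda>_. dens_distr g)" and ?S = "{I. I \<subseteq> {1..n} \<and> card I = k}"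
  let ?c = "sqrt 3 ^ k" and ?Z = "diag_weight_prod n k"
  let ?B = "{\<omega> \<in> space ?P. \<not> L_max n \<omega> < k}"
  define T where "T I \<omega> = (if Kset_on I \<omega> then ennreal (?c / ?Z \<omega>) else 0)" for I \<omega>
  have [measurable]: "?Z \<in> borel_measurable ?P"
    by (rule diag_weight_prod_measurable) (simp add: entry_idx_eq)
  have T_measurable: "T I \<in> borel_measurable ?P" if "I \<in> ?S" for I
    unfolding T_def[abs_def] using that
    by (intro measurable_If[OF _ _ Kset_on_sets[OF sets_dens_distr]]) auto
  have "?B = space ?P - {\<omega> \<in> space ?P. L_max n \<omega> < k}" by auto
  then have "?B \<in> sets ?P" using L_max_less_sets[OF sets_dens_distr] by auto
  then have "emeasure ?P ?B = (\<integral>\<^sup>+\<omega>. indicator ?B \<omega> \<partial>?P)"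
    by simp
  also have "\<dots> = (\<integral>\<^sup>+\<omega>. indicator {\<omega>. \<not> L_max n \<omega> < k} \<omega> \<partial>?P)"
    by (rule nn_integral_cong) (simp add: indicator_def)
  also have "\<dots> \<le> (\<integral>\<^sup>+\<omega>. ennreal (?Z \<omega> / ?c) + (\<Sum>I\<in>?S. T I \<omega>) \<partial>?P)"
    unfolding T_def by (intro nn_integral_mono indicator_L_max_ge_le) simp
  also have "\<dots> = (\<integral>\<^sup>+\<omega>. ennreal (?Z \<omega> / ?c) \<partial>?P) + (\<Sum>I\<in>?S. \<integral>\<^sup>+\<omega>. T I \<omega> \<partial>?P)"
  proof -
    have "(\<integral>\<^sup>+\<omega>. ennreal (?Z \<omega> / ?c) + (\<Sum>I\<in>?S. T I \<omega>) \<partial>?P)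
        = (\<integral>\<^sup>+\<omega>. ennreal (?Z \<omega> / ?c) \<partial>?P) + (\<integral>\<^sup>+\<omega>. (\<Sum>I\<in>?S. T I \<omega>) \<partial>?P)"
      using T_measurable by (intro nn_integral_add) auto
    also have "(\<integral>\<^sup>+\<omega>. (\<Sum>I\<in>?S. T I \<omega>) \<partial>?P) = (\<Sum>I\<in>?S. \<integral>\<^sup>+\<omega>. T I \<omega> \<partial>?P)"
      using T_measurable by (rule nn_integral_sum)
    finally show ?thesis .
  qed
  also have "\<dots> \<le> ennreal (weight_mean k ^ n / ?c) + ennreal (weight_mean k ^ n / ?c)"
    using sum_nn_integral_Kset_on_le[OF assms, of n]
      nn_integral_diag_weight_prod_divide[where n = n and c = "sqrt 3 ^ k", OF _ finite_entry_idx assms]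
    by (intro add_mono) (auto simp: T_def entry_idx_eq)
  also have "\<dots> = ennreal (2 * weight_mean k ^ n / ?c)"
    using weight_mean_ge_1[OF assms] by (simp flip: ennreal_plus)
  finally show ?thesis .
qed

lemma measure_L_max_ge_le:
  assumes "2 \<le> k"
  shows "measure (PiM (entry_idx n) (\<lambda>_. dens_distr g))
           {\<omega> \<in> space (PiM (entry_idx n) (\<lambda>_. dens_distr g)). \<not> L_max n \<omega> < k}
         \<le> 2 * (1 + 2 * beta_const / (real k - 1)) ^ n / sqrt 3 ^ k"
proof -
  interpret prob_space "PiM (entry_idx n) (\<lambda>_. dens_distr g)"
    by (rule prob_space_PiM) (use prob_space_dens_distr in auto)
  have "measure (PiM (entry_idx n) (\<lambda>_. dens_distr g))
          {\<omega> \<in> space (PiM (entry_idx n) (\<lambda>_. dens_distr g)). \<not> L_max n \<omega> < k}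
        \<le> 2 * weight_mean k ^ n / sqrt 3 ^ k"
    using emeasure_L_max_ge_le[OF assms, of n] weight_mean_ge_1[OF assms]
    by (simp add: emeasure_eq_measure ennreal_le_iff)
  also have "\<dots> \<le> 2 * (1 + 2 * beta_const / (real k - 1)) ^ n / sqrt 3 ^ k"
    using weight_mean_le[OF assms] weight_mean_ge_1[OF assms]
    by (intro divide_right_mono mult_left_mono power_mono) auto
  finally show ?thesis .
qed

lemma measure_L_max_le_tendsto_1:
  assumes C: "0 < C" and C_large: "4 * beta_const / ln 3 < C\<^sup>2"
  shows "(\<lambda>n. measure (PiM (entry_idx n) (\<lambda>_. dens_distr g))
            {\<omega> \<in> space (PiM (entry_idx n) (\<lambda>_. dens_distr g)). real (L_max n \<omega>) \<le> C * sqrt (real n)})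
         \<longlonglongrightarrow> 1"
proof -
  let ?P = "\<lambda>n. PiM (entry_idx n) (\<lambda>_. dens_distr g)"
  define k where "k n = nat \<lfloor>C * sqrt (real n)\<rfloor> + 1" for n
  define bad where "bad n = {\<omega> \<in> space (?P n). \<not> L_max n \<omega> < k n}" for n
  have k_ge: "C * sqrt (real n) \<le> real (k n)" for n
    using C by (simp add: k_def) linarith
  have k_ge_2: "2 \<le> k n" if "1 \<le> C * sqrt (real n)" for n
    using le_nat_floor[of 1 "C * sqrt (real n)"] that by (simp add: k_def)
  have good_eq: "measure (?P n) {\<omega> \<in> space (?P n). real (L_max n \<omega>) \<le> C * sqrt (real n)}
               = 1 - measure (?P n) (bad n)" for n
  proof -
    interpret prob_space "?P n"
      by (rule prob_space_PiM) (use prob_space_dens_distr in auto)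
    let ?G = "{\<omega> \<in> space (?P n). L_max n \<omega> < k n}"
    have "{\<omega> \<in> space (?P n). real (L_max n \<omega>) \<le> C * sqrt (real n)} = ?G"
      using C by (auto simp: k_def of_nat_le_iff_less_nat_floor)
    moreover have "bad n = space (?P n) - ?G" by (auto simp: bad_def)
    ultimately show ?thesis
      using prob_compl[OF L_max_less_sets[OF sets_dens_distr, of n "k n"]] by simp
  qed
  have "\<forall>\<^sub>F n in sequentially. 1 \<le> C * sqrt (real n)"
    using C by real_asymp
  then have "\<forall>\<^sub>F n in sequentially. measure (?P n) (bad n)
      \<le> 2 * (1 + 2 * beta_const / (real (k n) - 1)) ^ n / sqrt 3 ^ k n"
    by eventually_elim (use k_ge_2 in \<open>auto simp: bad_def intro!: measure_L_max_ge_le\<close>)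
  then have "(\<lambda>n. measure (?P n) (bad n)) \<longlonglongrightarrow> 0"
    by (intro tendsto_sandwich[OF _ _ tendsto_const first_moment_bound_tendsto_zero[OF C
          beta_const_nonneg C_large k_ge]]) auto
  then have "(\<lambda>n. 1 - measure (?P n) (bad n)) \<longlonglongrightarrow> 1 - 0"
    by (intro tendsto_diff tendsto_const)
  then show ?thesis by (simp add: good_eq)
qed

end

theorem theorem2p7:
  fixes g :: "real \<Rightarrow> real" and \<delta> :: real
  assumes g_pos: "\<forall>x\<in>{0..1}. g x > 0"
    and g_noninc: "\<forall>x y. 0 \<le> x \<longrightarrow> x \<le> y \<longrightarrow> y \<le> 1 \<longrightarrow> g y \<le> g x"
    and g_diff: "g differentiable_on {0..1}"
    and g_int: "g integrable_on {0..1}"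
    and g_total: "integral {0..1} g = 1"
    and hazard: "\<forall>x y. 0 \<le> x \<longrightarrow> x \<le> y \<longrightarrow> y < 1 \<longrightarrow>
                   g x / (1 - cdf_of g x) \<le> g y / (1 - cdf_of g y)"
    and \<delta>_pos: "\<delta> > 0"
  shows "(\<lambda>n. measure (PiM (entry_idx n) (\<lambda>_. dens_distr g))
            {\<omega> \<in> space (PiM (entry_idx n) (\<lambda>_. dens_distr g)).
               real (L_max n \<omega>) \<le> (c_const + \<delta>) * sqrt (real n)})
         \<longlonglongrightarrow> 1"
proof -
  interpret monotone_density g
    using g_pos g_noninc differentiable_imp_continuous_on[OF g_diff] g_total by unfold_locales auto
  have "c_const\<^sup>2 < (c_const + \<delta>)\<^sup>2"
    using c_const_pos \<delta>_pos by (intro power_strict_mono) auto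
  then have "4 * beta_const / ln 3 < (c_const + \<delta>)\<^sup>2"
    using c_const_sq_ge by linarith
  then show ?thesis
    using c_const_pos \<delta>_pos by (intro measure_L_max_le_tendsto_1) auto
qed

end
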